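(* Let $(\mathcal{P},\mu)$ be an $n$-dimensional complex admissible Poisson algebra such that $\mathfrak{g}_{\mathcal{P}}$ is a rigid solvable Lie algebra of rank $r$, written $\mathfrak{g}_{\mathcal{P}}=\mathfrak{t}\oplus\mathfrak{n}$ with $\mathfrak{n}$ the nilradical and $\mathfrak{t}$ a maximal exterior torus ($\dim\mathfrak{t}=r$), and suppose that all roots of $\mathfrak{t}$ on $\mathfrak{n}$ (the weights $\lambda\in\mathfrak{t}^*$ in the decomposition of $\mathfrak{n}$ into simultaneous eigenspaces of $\mathrm{ad}\,\mathfrak{t}$) are non-zero. Then $\mathcal{A}_{\mathcal{P}}^2=\{0\}$ and $(\mathcal{P},\mu)$ is rigid.
   Context: Associator: $A(X,Y,Z)=(X\cdot Y)\cdot Z-X\cdot(Y\cdot Z)$. An admissible Poisson algebra is a vector space with bilinear product $\mu(X,Y)=X\cdot Y$ satisfying $3A(X,Y,Z)=(X\cdot Z)\cdot Y+(Y\cdot Z)\cdot X-(Y\cdot X)\cdot Z-(Z\cdot X)\cdot Y$; $\{X,Y\}=\frac12(X\cdot Y-Y\cdot X)$, $X\bullet Y=\frac12(X\cdot Y+Y\cdot X)$, $\mathfrak{g}_{\mathcal{P}}=(\mathcal{P},\{\,,\,\})$, $\mathcal{A}_{\mathcal{P}}=(\mathcal{P},\bullet)$. A maximal exterior torus of a Lie algebra $\mathfrak{g}$ is a maximal abelian subalgebra $\mathfrak{t}$ such that $\mathrm{ad}\,X$ is semisimple for all $X\in\mathfrak{t}$; its dimension is the rank. A (formal) deformation of $\mu$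 is a $\mathbb{C}[[t]]$-bilinear product $\mu'=\mu+\sum_{i\ge1}t^i\varphi_i$ on $V\otimes\mathbb{C}[[t]]$ ($V=\mathbb{C}^n$) which again satisfies the admissible Poisson identity; $\mathcal{P}$ is rigid if every deformation $\mu'$ is isomorphic to $\mu$, i.e. there is $f\in GL(V\otimes\mathbb{C}[[t]])$ with $f^{-1}(\mu(f(X),f(Y)))=\mu'(X,Y)$ for all $X,Y$. A Lie algebra is rigid if every formal deformation of its bracket (as a Lie bracket) is isomorphic to it in the same sense. *)

theory Defs
  imports Complex_Main "HOL-Computational_Algebra.Formal_Power_Series"
begin

text \<open>Vectors of R^n (R a commutative ring) are functions 'n => R with 'n a finite index
  type of cardinality n.  V = C^n is 'n => complex; V \<otimes> C[[t]] = C[[t]]^n is 'n => complex fps.\<close>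

definition vadd :: "('n \<Rightarrow> 'r::comm_ring_1) \<Rightarrow> ('n \<Rightarrow> 'r) \<Rightarrow> ('n \<Rightarrow> 'r)" where
  "vadd x y = (\<lambda>k. x k + y k)"
definition vsub :: "('n \<Rightarrow> 'r::comm_ring_1) \<Rightarrow> ('n \<Rightarrow> 'r) \<Rightarrow> ('n \<Rightarrow> 'r)" where
  "vsub x y = (\<lambda>k. x k - y k)"
definition smul :: "'r::comm_ring_1 \<Rightarrow> ('n \<Rightarrow> 'r) \<Rightarrow> ('n \<Rightarrow> 'r)" where
  "smul c x = (\<lambda>k. c * x k)"
definition vzero :: "'n \<Rightarrow> 'r::comm_ring_1" where
  "vzero = (\<lambda>k. 0)"
definition vsum :: "('i \<Rightarrow> 'n \<Rightarrow> 'r::comm_ring_1) \<Rightarrow> 'i set \<Rightarrow> ('n \<Rightarrow> 'r)" where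
  "vsum f A = (\<lambda>k. \<Sum>i\<in>A. f i k)"
definition ebas :: "'n \<Rightarrow> 'n \<Rightarrow> 'r::comm_ring_1" where
  "ebas i = (\<lambda>k. if k = i then 1 else 0)"

definition blin :: "(('n \<Rightarrow> 'r::comm_ring_1) \<Rightarrow> ('n \<Rightarrow> 'r) \<Rightarrow> ('n \<Rightarrow> 'r)) \<Rightarrow> bool" where
  "blin m \<longleftrightarrow>
     (\<forall>x y z. m (vadd x y) z = vadd (m x z) (m y z)) \<and>
     (\<forall>x y z. m x (vadd y z) = vadd (m x y) (m x z)) \<and>
     (\<forall>c x y. m (smul c x) y = smul c (m x y)) \<and>
     (\<forall>c x y. m x (smul c y) = smul c (m x y))"

definition lin :: "(('n \<Rightarrow> 'r::comm_ring_1) \<Rightarrow> ('n \<Rightarrow> 'r)) \<Rightarrow> bool" where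
  "lin f \<longleftrightarrow> (\<forall>x y. f (vadd x y) = vadd (f x) (f y)) \<and> (\<forall>c x. f (smul c x) = smul c (f x))"

definition assoc :: "(('n \<Rightarrow> 'r::comm_ring_1) \<Rightarrow> ('n \<Rightarrow> 'r) \<Rightarrow> ('n \<Rightarrow> 'r))
     \<Rightarrow> ('n \<Rightarrow> 'r) \<Rightarrow> ('n \<Rightarrow> 'r) \<Rightarrow> ('n \<Rightarrow> 'r) \<Rightarrow> ('n \<Rightarrow> 'r)" where
  "assoc m x y z = vsub (m (m x y) z) (m x (m y z))"

definition adm_poisson :: "(('n \<Rightarrow> 'r::comm_ring_1) \<Rightarrow> ('n \<Rightarrow> 'r) \<Rightarrow> ('n \<Rightarrow> 'r)) \<Rightarrow> bool" where
  "adm_poisson m \<longleftrightarrow> (\<forall>x y z.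
     smul 3 (assoc m x y z) =
     vsub (vsub (vadd (m (m x z) y) (m (m y z) x)) (m (m y x) z)) (m (m z x) y))"

definition is_lie :: "(('n \<Rightarrow> 'r::comm_ring_1) \<Rightarrow> ('n \<Rightarrow> 'r) \<Rightarrow> ('n \<Rightarrow> 'r)) \<Rightarrow> bool" where
  "is_lie b \<longleftrightarrow> blin b \<and> (\<forall>x. b x x = vzero) \<and>
     (\<forall>x y z. vadd (vadd (b x (b y z)) (b y (b z x))) (b z (b x y)) = vzero)"

definition pbr :: "(('n \<Rightarrow> complex) \<Rightarrow> ('n \<Rightarrow> complex) \<Rightarrow> ('n \<Rightarrow> complex))
     \<Rightarrow> ('n \<Rightarrow> complex) \<Rightarrow> ('n \<Rightarrow> complex) \<Rightarrow> ('n \<Rightarrow> complex)" where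
  "pbr m x y = (\<lambda>k. (m x y k - m y x k) / 2)"
definition ppr :: "(('n \<Rightarrow> complex) \<Rightarrow> ('n \<Rightarrow> complex) \<Rightarrow> ('n \<Rightarrow> complex))
     \<Rightarrow> ('n \<Rightarrow> complex) \<Rightarrow> ('n \<Rightarrow> complex) \<Rightarrow> ('n \<Rightarrow> complex)" where
  "ppr m x y = (\<lambda>k. (m x y k + m y x k) / 2)"

inductive_set cspan :: "('n \<Rightarrow> complex) set \<Rightarrow> ('n \<Rightarrow> complex) set" for S where
  cspan_zero: "vzero \<in> cspan S"
| cspan_base: "x \<in> S \<Longrightarrow> x \<in> cspan S"
| cspan_add: "x \<in> cspan S \<Longrightarrow> y \<in> cspan S \<Longrightarrow> vadd x y \<in> cspan S"
| cspan_smul: "x \<in> cspan S \<Longrightarrow> smul c x \<in> cspan S"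

definition csubspace :: "('n \<Rightarrow> complex) set \<Rightarrow> bool" where
  "csubspace S \<longleftrightarrow> vzero \<in> S \<and> (\<forall>x\<in>S. \<forall>y\<in>S. vadd x y \<in> S) \<and> (\<forall>c. \<forall>x\<in>S. smul c x \<in> S)"

type_synonym 'n cbr = "('n \<Rightarrow> complex) \<Rightarrow> ('n \<Rightarrow> complex) \<Rightarrow> ('n \<Rightarrow> complex)"

definition lie_subalg :: "'n cbr \<Rightarrow> ('n \<Rightarrow> complex) set \<Rightarrow> bool" where
  "lie_subalg b S \<longleftrightarrow> csubspace S \<and> (\<forall>x\<in>S. \<forall>y\<in>S. b x y \<in> S)"

definition lie_ideal :: "'n cbr \<Rightarrow> ('n \<Rightarrow> complex) set \<Rightarrow> bool" where
  "lie_ideal b I \<longleftrightarrow> csubspace I \<and> (\<forall>x. \<forall>y\<in>I. b x y \<in> I)"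

fun derived_series :: "'n cbr \<Rightarrow> nat \<Rightarrow> ('n \<Rightarrow> complex) set" where
  "derived_series b 0 = UNIV"
| "derived_series b (Suc k) =
     cspan {b x y | x y. x \<in> derived_series b k \<and> y \<in> derived_series b k}"

definition lie_solvable :: "'n cbr \<Rightarrow> bool" where
  "lie_solvable b \<longleftrightarrow> (\<exists>k. derived_series b k = {vzero})"

fun lower_central :: "'n cbr \<Rightarrow> ('n \<Rightarrow> complex) set \<Rightarrow> nat \<Rightarrow> ('n \<Rightarrow> complex) set" where
  "lower_central b I 0 = I"
| "lower_central b I (Suc k) = cspan {b x y | x y. x \<in> I \<and> y \<in> lower_central b I k}"

definition lie_nilpotent_on :: "'n cbr \<Rightarrow> ('n \<Rightarrow> complex) set \<Rightarrow> bool" where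
  "lie_nilpotent_on b I \<longleftrightarrow> (\<exists>k. lower_central b I k = {vzero})"

definition nilradical :: "'n cbr \<Rightarrow> ('n \<Rightarrow> complex) set \<Rightarrow> bool" where
  "nilradical b N \<longleftrightarrow> lie_ideal b N \<and> lie_nilpotent_on b N \<and>
     (\<forall>I. lie_ideal b I \<and> lie_nilpotent_on b I \<longrightarrow> I \<subseteq> N)"

text \<open>Semisimple (= diagonalizable, over C) endomorphism of C^n: C^n has a basis of eigenvectors.\<close>
definition diagonalizable :: "(('n::finite \<Rightarrow> complex) \<Rightarrow> ('n \<Rightarrow> complex)) \<Rightarrow> bool" where
  "diagonalizable f \<longleftrightarrow> (\<exists>v :: 'n \<Rightarrow> ('n \<Rightarrow> complex).
     (\<forall>i. v i \<noteq> vzero \<and> (\<exists>c. f (v i) = smul c (v i))) \<and>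
     (\<forall>x. \<exists>a. x = vsum (\<lambda>i. smul (a i) (v i)) UNIV))"

definition ext_torus :: "('n::finite) cbr \<Rightarrow> ('n \<Rightarrow> complex) set \<Rightarrow> bool" where
  "ext_torus b T \<longleftrightarrow> lie_subalg b T \<and> (\<forall>x\<in>T. \<forall>y\<in>T. b x y = vzero) \<and>
     (\<forall>x\<in>T. diagonalizable (b x))"

definition max_ext_torus :: "('n::finite) cbr \<Rightarrow> ('n \<Rightarrow> complex) set \<Rightarrow> bool" where
  "max_ext_torus b T \<longleftrightarrow> ext_torus b T \<and> (\<forall>T'. ext_torus b T' \<and> T \<subseteq> T' \<longrightarrow> T' = T)"

definition is_root :: "'n cbr \<Rightarrow> ('n \<Rightarrow> complex) set \<Rightarrow> ('n \<Rightarrow> complex) set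
     \<Rightarrow> (('n \<Rightarrow> complex) \<Rightarrow> complex) \<Rightarrow> bool" where
  "is_root b T N lam \<longleftrightarrow> (\<exists>x\<in>N. x \<noteq> vzero \<and> (\<forall>t\<in>T. b t x = smul (lam t) x))"

definition fconst :: "('n \<Rightarrow> complex) \<Rightarrow> ('n \<Rightarrow> complex fps)" where
  "fconst x = (\<lambda>k. fps_const (x k))"

text \<open>C[[t]]-bilinear extension of a product on C^n to C[[t]]^n.\<close>
definition ext_prod :: "('n::finite) cbr \<Rightarrow> ('n \<Rightarrow> complex fps) \<Rightarrow> ('n \<Rightarrow> complex fps) \<Rightarrow> ('n \<Rightarrow> complex fps)" where
  "ext_prod m X Y = vsum (\<lambda>(i, j). smul (X i * Y j) (fconst (m (ebas i) (ebas j)))) UNIV"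

text \<open>m' is a C[[t]]-bilinear product on C[[t]]^n of the form m + sum_{i>=1} t^i phi_i.\<close>
definition is_deformation :: "('n::finite) cbr
     \<Rightarrow> (('n \<Rightarrow> complex fps) \<Rightarrow> ('n \<Rightarrow> complex fps) \<Rightarrow> ('n \<Rightarrow> complex fps)) \<Rightarrow> bool" where
  "is_deformation m m' \<longleftrightarrow> blin m' \<and>
     (\<forall>x y k. fps_nth (m' (fconst x) (fconst y) k) 0 = m x y k)"

definition def_isomorphic :: "('n::finite) cbr
     \<Rightarrow> (('n \<Rightarrow> complex fps) \<Rightarrow> ('n \<Rightarrow> complex fps) \<Rightarrow> ('n \<Rightarrow> complex fps)) \<Rightarrow> bool" where
  "def_isomorphic m m' \<longleftrightarrow> (\<exists>f. lin f \<and> bij f \<and>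
     (\<forall>X Y. inv f (ext_prod m (f X) (f Y)) = m' X Y))"

definition poisson_rigid :: "('n::finite) cbr \<Rightarrow> bool" where
  "poisson_rigid m \<longleftrightarrow> (\<forall>m'. is_deformation m m' \<and> adm_poisson m' \<longrightarrow> def_isomorphic m m')"

definition lie_rigid :: "('n::finite) cbr \<Rightarrow> bool" where
  "lie_rigid b \<longleftrightarrow> (\<forall>b'. is_deformation b b' \<and> is_lie b' \<longrightarrow> def_isomorphic b b')"

end

theory Submission
  imports Defs "HOL-Library.Function_Algebras"
begin

(* The symmetric part s x y = x y + y x of an admissible Poisson product is commutative and
   associative, and the inner derivations of the bracket act on it by derivations.  Such a
   product s must vanish.  Each weight vector a of the torus T in the nilradical is an
   eigenvector of multiplication by every t in T, with an eigenvalue beta_a(t) that is a character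
   of the algebra (T, s), and the weights satisfy lambda_a(s t t') = lambda_a(t) beta_a(t') +
   lambda_a(t') beta_a(t).  If beta_a(u) were non-zero, u would not be nilpotent in (T, s), and
   Fitting's lemma would give a non-zero idempotent e of T; but then every lambda_a(e) vanishes,
   so ad e kills T and all weight vectors, which span the algebra, and e = 0 because the centre
   meets T trivially.  Hence beta = 0, and s vanishes on T and on the weight vectors.
   So mu is the Lie bracket of g_P.  For a deformation of mu, the lowest non-zero coefficient of its
   symmetric part would again be such a product; so every deformation is anticommutative, i.e. a
   Lie deformation of the rigid Lie algebra g_P. *)

lemma vadd_eq: "vadd x y = x + y"
  by (auto simp: vadd_def)

lemma vzero_eq: "vzero = 0"
  by (auto simp: vzero_def)

lemma sum_apply: "sum f A k = (\<Sum>i\<in>A. f i k)"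
  by (induction A rule: infinite_finite_induct) auto

lemma vsum_eq: "vsum f A = sum f A"
  by (auto simp: vsum_def sum_apply)

interpretation M: module "smul :: 'r::comm_ring_1 \<Rightarrow> ('n \<Rightarrow> 'r) \<Rightarrow> _"
  by unfold_locales (auto simp: smul_def algebra_simps)

interpretation V: vector_space "smul :: complex \<Rightarrow> ('n \<Rightarrow> complex) \<Rightarrow> _"
  by unfold_locales (auto simp: smul_def algebra_simps)

lemma ebas_expansion: "x = (\<Sum>i\<in>UNIV. smul (x i) (ebas i :: 'n::finite \<Rightarrow> 'r::comm_ring_1))"
  by (simp add: fun_eq_iff sum_apply smul_def ebas_def if_distrib cong: if_cong)

lemma independent_ebas: "\<not> M.dependent (range (ebas :: 'n \<Rightarrow> 'n \<Rightarrow> complex))"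
  unfolding V.independent_explicit_finite_subsets
proof (intro allI impI ballI)
  fix S u v
  assume S: "S \<subseteq> range (ebas :: 'n \<Rightarrow> 'n \<Rightarrow> complex)" "finite S"
    and eq: "(\<Sum>v\<in>S. smul (u v) v) = 0" and v: "v \<in> S"
  then obtain i where vi: "v = ebas i" by auto
  have "0 = (\<Sum>w\<in>S. u w * w i)"
    using fun_cong[OF eq, of i] by (simp add: sum_apply smul_def)
  also have "\<dots> = (\<Sum>w\<in>{v}. u w * w i)"
  proof (intro sum.mono_neutral_right ballI)
    fix w assume w: "w \<in> S - {v}"
    then obtain j where "w = ebas j" using S(1) by auto
    with w show "u w * w i = 0" by (auto simp: vi ebas_def)
  qed (use S v in auto)
  finally show "u v = 0" by (simp add: vi ebas_def)
qed

interpretation FD: finite_dimensional_vector_space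
  "smul :: complex \<Rightarrow> ('n::finite \<Rightarrow> complex) \<Rightarrow> _" "range ebas"
proof
  have "x \<in> M.span (range ebas)" for x :: "'n \<Rightarrow> complex"
    by (subst ebas_expansion) (intro M.span_sum M.span_scale M.span_base rangeI)
  then show "M.span (range (ebas :: 'n \<Rightarrow> 'n \<Rightarrow> complex)) = UNIV" by auto
qed (simp_all add: independent_ebas)

lemma lin_module_hom: "lin f \<Longrightarrow> module_hom smul smul f"
  by unfold_locales (simp_all add: lin_def vadd_eq)

lemma lin_ebas_expansion:
  fixes f :: "('n::finite \<Rightarrow> 'r::comm_ring_1) \<Rightarrow> ('n \<Rightarrow> 'r)"
  assumes "lin f"
  shows "f v = (\<Sum>l\<in>UNIV. smul (v l) (f (ebas l)))"
proof -
  interpret module_hom smul smul f using assms by (rule lin_module_hom)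
  show ?thesis by (subst ebas_expansion[of v]) (simp add: sum scale)
qed

lemma blin_lin_left: "blin m \<Longrightarrow> lin (\<lambda>x. m x y)"
  by (simp add: blin_def lin_def)

lemma blin_lin_right: "blin m \<Longrightarrow> lin (m x)"
  by (simp add: blin_def lin_def)

lemma blinI:
  assumes "\<And>x y z. m (x + y) z = m x z + m y z" "\<And>x y z. m x (y + z) = m x y + m x z"
    "\<And>c x y. m (smul c x) y = smul c (m x y)" "\<And>c x y. m x (smul c y) = smul c (m x y)"
  shows "blin m"
  using assms by (simp add: blin_def vadd_eq)

context
  fixes m :: "('n \<Rightarrow> 'r::comm_ring_1) \<Rightarrow> ('n \<Rightarrow> 'r) \<Rightarrow> ('n \<Rightarrow> 'r)"
  assumes m: "blin m"
begin

interpretation L: module_hom smul smul "\<lambda>x. m x y" for y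
  using m by (intro lin_module_hom blin_lin_left)

interpretation R: module_hom smul smul "m x" for x
  using m by (intro lin_module_hom blin_lin_right)

lemma blin_ladd: "m (x + y) z = m x z + m y z" by (rule L.add)
lemma blin_radd: "m x (y + z) = m x y + m x z" by (rule R.add)
lemma blin_lmul: "m (smul c x) y = smul c (m x y)" by (rule L.scale)
lemma blin_rmul: "m x (smul c y) = smul c (m x y)" by (rule R.scale)
lemma blin_lzero: "m 0 y = 0" by (rule L.zero)
lemma blin_rzero: "m x 0 = 0" by (rule R.zero)
lemma blin_lneg: "m (- x) y = - m x y" by (rule L.neg)
lemma blin_rneg: "m x (- y) = - m x y" by (rule R.neg)
lemma blin_lsub: "m (x - y) z = m x z - m y z" by (rule L.diff)
lemma blin_rsub: "m x (y - z) = m x y - m x z" by (rule R.diff)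

end

lemmas blin_simps = blin_ladd blin_radd blin_lmul blin_rmul blin_lzero blin_rzero
  blin_lneg blin_rneg blin_lsub blin_rsub

subsection \<open>Consequences of the admissible Poisson identity\<close>

definition commutator :: "(('n \<Rightarrow> 'r::comm_ring_1) \<Rightarrow> ('n \<Rightarrow> 'r) \<Rightarrow> ('n \<Rightarrow> 'r)) \<Rightarrow> _" where
  "commutator m x y = m x y - m y x"

definition anticommutator :: "(('n \<Rightarrow> 'r::comm_ring_1) \<Rightarrow> ('n \<Rightarrow> 'r) \<Rightarrow> ('n \<Rightarrow> 'r)) \<Rightarrow> _" where
  "anticommutator m x y = m x y + m y x"

lemma blin_commutator: "blin m \<Longrightarrow> blin (commutator m)"
  by (rule blinI) (simp_all add: commutator_def blin_simps M.scale_right_diff_distrib fun_eq_iff)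

lemma blin_anticommutator: "blin m \<Longrightarrow> blin (anticommutator m)"
  by (rule blinI) (simp_all add: anticommutator_def blin_simps M.scale_right_distrib fun_eq_iff)

lemma anticommutator_commute: "anticommutator m x y = anticommutator m y x"
  by (simp add: anticommutator_def add.commute)

definition adm_defect :: "(('n \<Rightarrow> 'r::comm_ring_1) \<Rightarrow> ('n \<Rightarrow> 'r) \<Rightarrow> ('n \<Rightarrow> 'r)) \<Rightarrow> _" where
  "adm_defect m x y z k = 3 * (m (m x y) z k - m x (m y z) k)
     - m (m x z) y k - m (m y z) x k + m (m y x) z k + m (m z x) y k"

lemma adm_defect_zero: "adm_poisson m \<Longrightarrow> adm_defect m x y z k = 0"
  unfolding adm_poisson_def
  by (drule spec[of _ x], drule spec[of _ y], drule spec[of _ z], drule fun_cong[of _ _ k])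
    (simp add: adm_defect_def smul_def assoc_def vsub_def vadd_def algebra_simps)

lemma numeral_mult_eq_0D: "numeral n * a = 0 \<Longrightarrow> a = (0::'r::{idom,semiring_char_0})"
  by simp

lemma numeral_mult_diff_eq_0D: "numeral n * (a - b) = 0 \<Longrightarrow> a = (b::'r::{idom,semiring_char_0})"
  by simp

text \<open>Each of the following identities holds because three times it is a signed sum of
  instances of the admissible identity.\<close>

context
  fixes m :: "('n \<Rightarrow> 'r::{idom,semiring_char_0}) \<Rightarrow> ('n \<Rightarrow> 'r) \<Rightarrow> ('n \<Rightarrow> 'r)"
  assumes m: "blin m" and adm: "adm_poisson m"
begin

lemma adm_poisson_anticommutator_assoc:
  "anticommutator m (anticommutator m x y) z = anticommutator m x (anticommutator m y z)"
proof
  fix k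
  have "3 * (anticommutator m (anticommutator m x y) z k - anticommutator m x (anticommutator m y z) k)
      = adm_defect m x y z k + adm_defect m x z y k - adm_defect m z x y k - adm_defect m z y x k"
    by (simp add: anticommutator_def adm_defect_def blin_simps[OF m] algebra_simps)
  also have "\<dots> = 0" by (simp add: adm_defect_zero[OF adm])
  finally show "anticommutator m (anticommutator m x y) z k = anticommutator m x (anticommutator m y z) k"
    by (rule numeral_mult_diff_eq_0D)
qed

lemma adm_poisson_commutator_leibniz:
  "commutator m x (anticommutator m y z)
     = anticommutator m (commutator m x y) z + anticommutator m y (commutator m x z)"
proof
  fix k
  have "3 * (commutator m x (anticommutator m y z) k
      - (anticommutator m (commutator m x y) z + anticommutator m y (commutator m x z)) k)
      = - adm_defect m x y z k - adm_defect m x z y k + adm_defect m y x z k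
        - adm_defect m y z x k + adm_defect m z x y k - adm_defect m z y x k"
    by (simp add: commutator_def anticommutator_def adm_defect_def blin_simps[OF m] algebra_simps)
  also have "\<dots> = 0" by (simp add: adm_defect_zero[OF adm])
  finally show "commutator m x (anticommutator m y z) k
      = (anticommutator m (commutator m x y) z + anticommutator m y (commutator m x z)) k"
    by (rule numeral_mult_diff_eq_0D)
qed

lemma adm_poisson_commutator_jacobi:
  "commutator m x (commutator m y z) + commutator m y (commutator m z x)
     + commutator m z (commutator m x y) = 0"
proof
  fix k
  have "3 * (commutator m x (commutator m y z) + commutator m y (commutator m z x)
      + commutator m z (commutator m x y)) k
      = - adm_defect m x y z k + adm_defect m x z y k + adm_defect m y x z k
        - adm_defect m y z x k - adm_defect m z x y k + adm_defect m z y x k"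
    by (simp add: commutator_def adm_defect_def blin_simps[OF m] algebra_simps)
  also have "\<dots> = 0" by (simp add: adm_defect_zero[OF adm])
  finally show "(commutator m x (commutator m y z) + commutator m y (commutator m z x)
      + commutator m z (commutator m x y)) k = 0 k"
    by (simp only: zero_fun_apply) (rule numeral_mult_eq_0D)
qed

text \<open>For an anticommutative product the admissible identity reduces to twice the Jacobi identity.\<close>

lemma adm_poisson_anticommutative_is_lie:
  assumes anti: "\<And>x y. anticommutator m x y = 0"
  shows "is_lie m"
  unfolding is_lie_def
proof (intro conjI allI)
  have swap: "m y x = - m x y" for x y
    using anti[where x=x and y=y] unfolding anticommutator_def add_eq_0_iff .
  show "blin m" by (rule m)
  show "m x x = vzero" for x
  proof
    fix k
    have "2 * m x x k = 0"
      using fun_cong[OF anti[of x x], of k] by (simp only: anticommutator_def mult_2 plus_fun_apply zero_fun_apply)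
    then show "m x x k = vzero k" unfolding vzero_def by (rule numeral_mult_eq_0D)
  qed
  show "vadd (vadd (m x (m y z)) (m y (m z x))) (m z (m x y)) = vzero" for x y z
  proof
    fix k
    have "m (m y x) z = - m (m x y) z" "m (m z x) y = - m (m x z) y"
      "m x (m y z) = - m (m y z) x" "m y (m z x) = m (m x z) y" "m z (m x y) = - m (m x y) z"
      by (simp_all only: swap[where x=x and y=y] swap[where x=x and y=z] swap[where x="m y z" and y=x]
          swap[where x="m x z" and y=y] swap[where x="m x y" and y=z] blin_lneg[OF m] blin_rneg[OF m]
          minus_minus)
    then have "2 * (m x (m y z) k + m y (m z x) k + m z (m x y) k) = - adm_defect m x y z k"
      by (simp add: adm_defect_def algebra_simps)
    then show "vadd (vadd (m x (m y z)) (m y (m z x))) (m z (m x y)) k = vzero k"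
      unfolding adm_defect_zero[OF adm] vadd_def vzero_def minus_zero
      by (rule numeral_mult_eq_0D)
  qed
qed

end

subsection \<open>Eigenvectors and commuting diagonalizable maps\<close>

lemma lin_funpow: "lin f \<Longrightarrow> lin (f ^^ k)"
  by (induction k) (simp_all add: lin_def)

lemma eigenvectors_sum_eq_0:
  fixes f :: "('n \<Rightarrow> complex) \<Rightarrow> ('n \<Rightarrow> complex)"
  assumes f: "lin f"
    and "finite C" and "\<And>c. c \<in> C \<Longrightarrow> f (y c) = smul c (y c)" and "sum y C = 0" and "c \<in> C"
  shows "y c = 0"
  using assms(2-)
proof (induction C arbitrary: y c rule: finite_induct)
  case (insert c0 C)
  interpret f: module_hom smul smul f using f by (rule lin_module_hom)
  define y' where "y' c = smul (c - c0) (y c)" for c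
  have "sum y' C = sum y' (insert c0 C)"
    using insert.hyps by (simp add: y'_def)
  also have "\<dots> = f (sum y (insert c0 C)) - smul c0 (sum y (insert c0 C))"
    using insert.prems(1)
    by (simp add: y'_def f.sum M.scale_sum_right M.scale_left_diff_distrib sum_subtractf)
  also have "\<dots> = 0" by (simp only: insert.prems(2) f.zero M.scale_zero_right diff_zero)
  finally have "sum y' C = 0" .
  moreover have "f (y' c) = smul c (y' c)" if "c \<in> C" for c
    using insert.prems(1) that by (simp add: y'_def f.scale mult.commute)
  ultimately have "y' c = 0" if "c \<in> C" for c
    using insert.IH that by blast
  then have yC: "y c = 0" if "c \<in> C" for c
    using that insert.hyps(2) by (auto simp: y'_def)
  then have "sum y C = 0"
    by (simp add: sum.neutral)
  moreover have "y c0 + sum y C = 0"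
    using insert.prems(2) unfolding sum.insert[OF insert.hyps] .
  ultimately have "y c0 = 0"
    by (metis add.right_neutral)
  with yC show ?case using insert.prems(3) by auto
qed simp

lemma diagonalizable_eigen_decomposition:
  fixes f :: "('n::finite \<Rightarrow> complex) \<Rightarrow> ('n \<Rightarrow> complex)"
  assumes "diagonalizable f" and f: "lin f"
  obtains C y where "finite C" and "\<And>c. c \<in> C \<Longrightarrow> f (y c) = smul c (y c)" and "x = sum y C"
proof -
  interpret f: module_hom smul smul f using f by (rule lin_module_hom)
  obtain v :: "'n \<Rightarrow> 'n \<Rightarrow> complex" where
    ev: "\<forall>i. \<exists>c. f (v i) = smul c (v i)" and sp: "\<And>x. \<exists>a. x = vsum (\<lambda>i. smul (a i) (v i)) UNIV"
    using assms(1) unfolding diagonalizable_def by blast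
  obtain e where e: "\<And>i. f (v i) = smul (e i) (v i)"
    using choice[OF ev] by blast
  obtain a where a: "x = (\<Sum>i\<in>UNIV. smul (a i) (v i))"
    using sp[of x] by (auto simp: vsum_eq)
  define y where "y c = (\<Sum>i\<in>{i. e i = c}. smul (a i) (v i))" for c
  have "x = (\<Sum>c\<in>range e. y c)"
    unfolding a y_def by (subst sum.image_gen[where g=e, OF finite_UNIV]) simp
  moreover have "f (y c) = smul c (y c)" for c
    by (simp add: y_def f.sum f.scale e M.scale_sum_right mult.commute)
  ultimately show ?thesis using that[of "range e" y] by simp
qed

definition joint_eigenvectors :: "(('n \<Rightarrow> complex) \<Rightarrow> ('n \<Rightarrow> complex)) set \<Rightarrow> ('n \<Rightarrow> complex) set"
  where "joint_eigenvectors F = {x. \<forall>f\<in>F. \<exists>c. f x = smul c x}"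

lemma joint_eigenvectors_refine:
  fixes f :: "('n::finite \<Rightarrow> complex) \<Rightarrow> ('n \<Rightarrow> complex)"
  assumes f: "lin f" "diagonalizable f" and F: "\<And>h. h \<in> F \<Longrightarrow> lin h \<and> f \<circ> h = h \<circ> f"
    and x: "x \<in> joint_eigenvectors F"
  shows "x \<in> M.span (joint_eigenvectors (insert f F))"
proof -
  interpret ff: module_hom smul smul f using f(1) by (rule lin_module_hom)
  obtain C y where C: "finite C" and ey: "\<And>c. c \<in> C \<Longrightarrow> f (y c) = smul c (y c)" and xs: "x = sum y C"
    using diagonalizable_eigen_decomposition[OF f(2,1)] by metis
  have "\<exists>d. h (y c) = smul d (y c)" if c: "c \<in> C" and h: "h \<in> F" for c h
  proof -
    interpret hh: module_hom smul smul h using F[OF h] by (intro lin_module_hom) simp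
    have fh: "f (h v) = h (f v)" for v
      using fun_cong[OF conjunct2[OF F[OF h]], of v] by simp
    obtain d where d: "h x = smul d x" using x h by (auto simp: joint_eigenvectors_def)
    define z where "z c = h (y c) - smul d (y c)" for c
    have "f (z c) = smul c (z c)" if "c \<in> C" for c
      by (simp add: z_def ff.diff ff.scale fh ey[OF that] hh.scale M.scale_right_diff_distrib mult.commute)
    moreover have "sum z C = 0"
      using d by (simp add: z_def xs hh.sum sum_subtractf M.scale_sum_right)
    ultimately have "z c = 0"
      using eigenvectors_sum_eq_0[OF f(1) C] c by blast
    then show ?thesis by (auto simp: z_def)
  qed
  then have "y c \<in> joint_eigenvectors (insert f F)" if "c \<in> C" for c
    using ey that by (auto simp: joint_eigenvectors_def)
  then show ?thesis
    unfolding xs by (intro M.span_sum M.span_base)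
qed

lemma span_joint_eigenvectors:
  assumes "finite F" and "\<And>f. f \<in> F \<Longrightarrow> lin f \<and> diagonalizable f"
    and "\<And>f h. f \<in> F \<Longrightarrow> h \<in> F \<Longrightarrow> f \<circ> h = h \<circ> f"
  shows "M.span (joint_eigenvectors F) = UNIV"
  using assms
proof (induction F rule: finite_induct)
  case empty
  then show ?case by (auto simp: joint_eigenvectors_def intro: M.span_base)
next
  case (insert f F)
  have "joint_eigenvectors F \<subseteq> M.span (joint_eigenvectors (insert f F))"
    using insert.prems by (intro subsetI joint_eigenvectors_refine) blast+
  then have "M.span (joint_eigenvectors F) \<subseteq> M.span (joint_eigenvectors (insert f F))"
    by (intro M.span_minimal) auto
  then show ?case using insert by auto
qed

subsection \<open>Idempotents in finite-dimensional commutative algebras\<close>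

lemma lin_surj_on_imp_inj_on:
  fixes L :: "('n::finite \<Rightarrow> complex) \<Rightarrow> ('n \<Rightarrow> complex)"
  assumes L: "lin L" and A: "M.subspace A" and LA: "L ` A = A"
  shows "inj_on L A"
proof -
  interpret module_hom smul smul L using L by (rule lin_module_hom)
  obtain B where B: "B \<subseteq> A" "\<not> M.dependent B" "A \<subseteq> M.span B" "card B = V.dim A"
    using V.basis_exists[of A] by blast
  have fin: "finite B" using FD.finiteI_independent[OF B(2)] .
  have "A \<subseteq> L ` M.span B"
    using LA B(3) by blast
  then have "A \<subseteq> M.span (L ` B)"
    by (simp only: span_image)
  then have "V.dim A \<le> card (L ` B)"
    using fin by (intro V.dim_le_card) auto
  moreover have "card (L ` B) \<le> card B"
    using fin by (rule card_image_le)
  ultimately have card_eq: "card (L ` B) = card B" using B(4) by simp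
  have "\<not> M.dependent (L ` B)"
    using B(1) LA \<open>A \<subseteq> M.span (L ` B)\<close> fin card_eq B(4)
    by (intro FD.card_le_dim_spanning[of _ A]) auto
  moreover have "inj_on L B"
    using fin card_eq by (simp add: eq_card_imp_inj_on)
  ultimately have "inj_on L (M.span B)"
    by (rule inj_on_span_independent_image)
  then show ?thesis using B(3) inj_on_subset by blast
qed

lemma fitting_stable_image:
  fixes L :: "('n::finite \<Rightarrow> complex) \<Rightarrow> ('n \<Rightarrow> complex)"
  assumes L: "lin L" and T: "M.subspace T" and LT: "L ` T \<subseteq> T"
  shows "\<exists>m. L ` ((L ^^ m) ` T) = (L ^^ m) ` T"
proof -
  define A where "A k = (L ^^ k) ` T" for k
  have A_Suc: "A (Suc k) = L ` A k" for k
    by (simp add: A_def image_comp)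
  have subspace: "M.subspace (A k)" for k
    using module_hom.subspace_image[OF lin_module_hom[OF lin_funpow[OF L]] T] by (simp add: A_def)
  have decreasing: "A (Suc k) \<subseteq> A k" for k
  proof (induction k)
    case 0 then show ?case using LT by (simp add: A_def)
  next
    case (Suc k) then show ?case by (simp add: A_Suc image_mono)
  qed
  have "\<exists>m. V.dim (A (Suc m)) = V.dim (A m)"
  proof (rule ccontr)
    assume "\<nexists>m. V.dim (A (Suc m)) = V.dim (A m)"
    then have less: "V.dim (A (Suc k)) < V.dim (A k)" for k
      using FD.dim_subset[OF decreasing[of k]] by (simp add: order_less_le)
    have "V.dim (A k) + k \<le> V.dim (A 0)" for k
    proof (induction k)
      case (Suc k) then show ?case using less[of k] by simp
    qed simp
    from this[of "Suc (V.dim (A 0))"] show False by simp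
  qed
  then obtain m where "V.dim (A (Suc m)) = V.dim (A m)" ..
  then have "A (Suc m) = A m"
    by (intro FD.subspace_dim_equal subspace decreasing) simp
  then have "L ` ((L ^^ m) ` T) = (L ^^ m) ` T"
    unfolding A_Suc unfolding A_def .
  then show ?thesis ..
qed

lemma funpow_image_eq: "f ` A = A \<Longrightarrow> (f ^^ j) ` A = A"
proof (induction j)
  case (Suc j)
  have "(f ^^ Suc j) ` A = f ` ((f ^^ j) ` A)"
    by (simp add: image_comp)
  then show ?case using Suc by simp
qed simp

context
  fixes s :: "('n::finite \<Rightarrow> complex) \<Rightarrow> ('n \<Rightarrow> complex) \<Rightarrow> ('n \<Rightarrow> complex)"
  assumes s: "blin s" and comm: "\<And>x y. s x y = s y x" and assoc: "\<And>x y z. s (s x y) z = s x (s y z)"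
begin

lemma funpow_mult_eq_power_mult: "(s u ^^ Suc k) v = s ((s u ^^ k) u) v"
proof (induction k arbitrary: v)
  case (Suc k)
  have "(s u ^^ Suc (Suc k)) v = s u (s ((s u ^^ k) u) v)"
    using Suc.IH by simp
  also have "\<dots> = s ((s u ^^ Suc k) u) v"
    by (simp add: assoc)
  finally show ?case .
qed simp

lemma mult_left_commute: "s x (s y z) = s y (s x z)"
  by (simp add: assoc[symmetric] comm[of x y])

lemma funpow_mult_commute: "s x ((s u ^^ k) v) = (s u ^^ k) (s x v)"
proof (induction k)
  case (Suc k)
  have "s x ((s u ^^ Suc k) v) = s u (s x ((s u ^^ k) v))"
    using mult_left_commute[of x u] by simp
  also have "\<dots> = (s u ^^ Suc k) (s x v)"
    using Suc.IH by simp
  finally show ?case .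
qed simp

text \<open>Fitting's lemma for multiplication by a non-nilpotent element \<open>u\<close>: on the stable image
  \<open>A\<close> multiplication by \<open>u\<close> is bijective, so the power \<open>w\<close> of \<open>u\<close> in \<open>A\<close> has a preimage \<open>e\<close>
  with \<open>w e = w\<close>, and injectivity turns \<open>w (e e) = w e\<close> into \<open>e e = e\<close>.\<close>

lemma idempotent_of_non_nilpotent:
  assumes T: "M.subspace T" and closed: "\<And>x y. x \<in> T \<Longrightarrow> y \<in> T \<Longrightarrow> s x y \<in> T"
    and u: "u \<in> T" and non_nilpotent: "\<And>k. (s u ^^ k) u \<noteq> 0"
  shows "\<exists>e\<in>T. e \<noteq> 0 \<and> s e e = e"
proof -
  have L: "lin (s u)" using s by (rule blin_lin_right)
  have LT: "s u ` T \<subseteq> T" using closed u by auto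
  obtain m where stable: "s u ` ((s u ^^ m) ` T) = (s u ^^ m) ` T"
    using fitting_stable_image[OF L T LT] by blast
  define A where "A = (s u ^^ m) ` T"
  have A: "M.subspace A"
    unfolding A_def using T by (rule module_hom.subspace_image[OF lin_module_hom[OF lin_funpow[OF L]]])
  have powers_T: "(s u ^^ k) x \<in> T" if "x \<in> T" for k x
    using that by (induction k) (simp_all add: closed u)
  have surj: "(s u ^^ j) ` A = A" for j
    using stable unfolding A_def by (rule funpow_image_eq)
  have inj: "inj_on (s u ^^ j) A" for j
    using lin_surj_on_imp_inj_on[OF lin_funpow[OF L] A surj] .
  have ideal: "s x y \<in> A" if "x \<in> T" "y \<in> A" for x y
    using that closed by (auto simp: A_def funpow_mult_commute)
  define w where "w = (s u ^^ m) u"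
  have "w \<in> A" using u by (simp add: w_def A_def)
  then obtain e where e: "e \<in> A" and we: "(s u ^^ Suc m) e = w"
    using surj[of "Suc m"] by (metis imageE)
  have swe: "s w e = w" using we unfolding funpow_mult_eq_power_mult w_def .
  have eT: "e \<in> T" using e powers_T by (auto simp: A_def)
  have "(s u ^^ Suc m) (s e e) = s (s w e) e"
    by (simp only: funpow_mult_eq_power_mult w_def assoc)
  also have "\<dots> = (s u ^^ Suc m) e"
    using we swe by simp
  finally have "(s u ^^ Suc m) (s e e) = (s u ^^ Suc m) e" .
  then have "s e e = e"
    using inj_onD[OF inj] e ideal[OF eT e] by blast
  moreover have "e \<noteq> 0"
    using swe non_nilpotent[of m] blin_rzero[OF s] by (auto simp: w_def)
  ultimately show ?thesis using eT by blast
qed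

end

subsection \<open>A torus acting on the nilradical with non-zero roots\<close>

lemma cspan_eq_zero: "S \<subseteq> {vzero} \<Longrightarrow> cspan S = {vzero}"
proof
  assume S: "S \<subseteq> {vzero}"
  show "cspan S \<subseteq> {vzero}"
  proof
    fix x assume "x \<in> cspan S"
    then show "x \<in> {vzero}"
      by induction (use S in \<open>auto simp: vzero_def vadd_def smul_def\<close>)
  qed
qed (auto intro: cspan_zero)

text \<open>The eigenvalue of \<open>f\<close> at an eigenvector \<open>a\<close>, read off at a non-zero coordinate of \<open>a\<close>
  (a junk value if \<open>a\<close> is not an eigenvector).\<close>

definition eigval :: "(('n \<Rightarrow> complex) \<Rightarrow> ('n \<Rightarrow> complex)) \<Rightarrow> ('n \<Rightarrow> complex) \<Rightarrow> complex" where
  "eigval f a = (let k = SOME k. a k \<noteq> 0 in f a k / a k)"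

lemma eigval_eq:
  assumes "f a = smul c a" and "a \<noteq> 0"
  shows "eigval f a = c"
proof -
  have "\<exists>k. a k \<noteq> 0" using assms(2) by (auto simp: fun_eq_iff)
  then have "a (SOME k. a k \<noteq> 0) \<noteq> 0" by (rule someI_ex)
  then show ?thesis by (simp add: eigval_def Let_def assms(1) smul_def)
qed

lemma smul_right_cancel: "smul c a = smul d a \<Longrightarrow> a \<noteq> (0 :: 'n \<Rightarrow> complex) \<Longrightarrow> c = d"
  by (metis eigval_eq)

locale torus_nilradical_split =
  fixes g :: "('n::finite) cbr" and T N :: "('n \<Rightarrow> complex) set"
  assumes lie: "is_lie g" and torus: "ext_torus g T" and nilradical: "nilradical g N"
    and torus_inter_nilradical: "T \<inter> N = {vzero}"
    and torus_plus_nilradical: "\<forall>x. \<exists>t\<in>T. \<exists>y\<in>N. x = vadd t y"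
    and roots_nonzero: "\<forall>lam. is_root g T N lam \<longrightarrow> (\<exists>t\<in>T. lam t \<noteq> 0)"
begin

lemma blin_g: "blin g"
  using lie by (simp add: is_lie_def)

lemmas g_simps = blin_simps[OF blin_g]

lemma g_antisym: "g x y = - g y x"
proof -
  have "g (x + y) (x + y) = 0" "g x x = 0" "g y y = 0"
    using lie by (simp_all add: is_lie_def vzero_eq flip: vadd_eq)
  then have "g y x + g x y = 0" by (simp add: g_simps)
  then show ?thesis by (simp add: add_eq_0_iff)
qed

lemma g_jacobi: "g x (g y z) = g (g x y) z + g y (g x z)"
proof -
  have "g x (g y z) = - (g y (g z x) + g z (g x y))"
    using lie unfolding eq_neg_iff_add_eq_0 by (simp add: is_lie_def vzero_eq vadd_eq add.assoc)
  moreover have "g (g x y) z = - g z (g x y)" "g y (g x z) = - g y (g z x)"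
    by (simp_all only: g_antisym[of _ z] g_antisym[of x z] g_simps)
  ultimately show ?thesis by (simp add: add.commute)
qed

lemma torus_subspace: "M.subspace T"
  using torus by (simp add: ext_torus_def lie_subalg_def csubspace_def M.subspace_def vzero_eq vadd_eq)

lemma torus_abelian: "t \<in> T \<Longrightarrow> t' \<in> T \<Longrightarrow> g t t' = 0"
  using torus by (simp add: ext_torus_def vzero_eq)

lemma torus_diagonalizable: "t \<in> T \<Longrightarrow> diagonalizable (g t)"
  using torus by (simp add: ext_torus_def)

lemma nilradical_subspace: "M.subspace N"
  using nilradical by (simp add: nilradical_def lie_ideal_def csubspace_def M.subspace_def vzero_eq vadd_eq)

lemma nilradical_ideal: "y \<in> N \<Longrightarrow> g x y \<in> N"
  using nilradical by (simp add: nilradical_def lie_ideal_def)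

lemma torus_nilradical_decomp: "\<exists>t\<in>T. \<exists>y\<in>N. x = t + y"
  using torus_plus_nilradical by (simp add: vadd_eq)

lemma torus_self_centralizing: "(\<And>t. t \<in> T \<Longrightarrow> g t v = 0) \<Longrightarrow> v \<in> T"
proof -
  assume v: "\<And>t. t \<in> T \<Longrightarrow> g t v = 0"
  obtain t0 n where t0: "t0 \<in> T" and n: "n \<in> N" and vn: "v = t0 + n"
    using torus_nilradical_decomp by blast
  have "g t n = 0" if "t \<in> T" for t
    using v[OF that] torus_abelian[OF that t0] by (simp add: vn g_simps)
  then have "n = 0 \<or> is_root g T N (\<lambda>_. 0)"
    using n by (auto simp: is_root_def vzero_eq smul_def zero_fun_def)
  then show "v \<in> T" using roots_nonzero vn t0 by auto
qed

text \<open>The centre is a nilpotent ideal, hence lies in the nilradical, which meets the torus trivially.\<close>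

lemma torus_central_eq_0:
  assumes e: "e \<in> T" and central: "\<And>x. g e x = 0"
  shows "e = 0"
proof -
  define Z where "Z = {z. \<forall>x. g x z = 0}"
  have "g x e = 0" for x
    using g_antisym[of x e] central[of x] by simp
  then have "e \<in> Z" by (simp add: Z_def)
  have "csubspace Z"
    unfolding csubspace_def Z_def by (simp add: vzero_eq vadd_eq g_simps)
  then have "lie_ideal g Z"
    unfolding lie_ideal_def by (simp add: Z_def g_simps)
  moreover have "lower_central g Z (Suc 0) = {vzero}"
    unfolding lower_central.simps by (rule cspan_eq_zero) (auto simp: Z_def vzero_eq)
  then have "lie_nilpotent_on g Z"
    unfolding lie_nilpotent_on_def by blast
  ultimately have "Z \<subseteq> N"
    using nilradical by (simp add: nilradical_def)
  then show "e = 0"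
    using \<open>e \<in> Z\<close> e torus_inter_nilradical by (auto simp: vzero_eq)
qed

definition weight_vectors :: "('n \<Rightarrow> complex) set" where
  "weight_vectors = {a \<in> N. a \<noteq> 0 \<and> (\<forall>t\<in>T. \<exists>c. g t a = smul c a)}"

definition weight :: "('n \<Rightarrow> complex) \<Rightarrow> ('n \<Rightarrow> complex) \<Rightarrow> complex" where
  "weight a t = eigval (g t) a"

lemma weight_vector_eigen:
  assumes "a \<in> weight_vectors" and "t \<in> T"
  shows "g t a = smul (weight a t) a"
proof -
  obtain c where "g t a = smul c a" and "a \<noteq> 0"
    using assms by (auto simp: weight_vectors_def)
  then show ?thesis by (simp add: weight_def eigval_eq)
qed

lemma weight_vector_weight_nonzero: "a \<in> weight_vectors \<Longrightarrow> \<exists>t\<in>T. weight a t \<noteq> 0"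
proof -
  assume a: "a \<in> weight_vectors"
  have "is_root g T N (weight a)"
    unfolding is_root_def
    using a weight_vector_eigen[OF a] by (intro bexI[of _ a]) (auto simp: weight_vectors_def vzero_eq)
  then show ?thesis using roots_nonzero by blast
qed

lemma joint_eigenvector_torus_or_weight:
  assumes x: "x \<in> joint_eigenvectors (g ` T)" and nz: "x \<noteq> 0"
  shows "x \<in> T \<union> weight_vectors"
proof -
  have eig: "g t x = smul (eigval (g t) x) x" if t: "t \<in> T" for t
  proof -
    obtain c where "g t x = smul c x" using x t by (auto simp: joint_eigenvectors_def)
    then show ?thesis using nz by (simp add: eigval_eq)
  qed
  show ?thesis
  proof (cases "\<forall>t\<in>T. eigval (g t) x = 0")
    case True
    then have "x \<in> T" using eig by (intro torus_self_centralizing) simp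
    then show ?thesis by simp
  next
    case False
    then obtain h where h: "h \<in> T" and l: "eigval (g h) x \<noteq> 0" by blast
    define l where "l = eigval (g h) x"
    obtain t n where t: "t \<in> T" and n: "n \<in> N" and xtn: "x = t + n"
      using torus_nilradical_decomp by blast
    have "g h x = smul l x"
      using eig[OF h] by (simp add: l_def)
    then have "g h n = smul l t + smul l n"
      using torus_abelian[OF h t] by (simp add: xtn g_simps M.scale_right_distrib)
    then have "smul l t = g h n - smul l n" by (simp add: eq_diff_eq)
    moreover have "g h n - smul l n \<in> N"
      using nilradical_ideal[OF n] n nilradical_subspace by (simp add: M.subspace_diff M.subspace_scale)
    moreover have "smul l t \<in> T"
      using t torus_subspace by (simp add: M.subspace_scale)
    ultimately have "smul l t \<in> T \<inter> N" by simp
    then have "smul l t = 0"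
      using torus_inter_nilradical by (simp add: vzero_eq)
    then have "x = n" using l by (simp add: xtn l_def)
    then have "x \<in> weight_vectors"
      using n nz x by (auto simp: weight_vectors_def joint_eigenvectors_def)
    then show ?thesis by simp
  qed
qed

lemma torus_ad_commute: "t \<in> T \<Longrightarrow> t' \<in> T \<Longrightarrow> g t \<circ> g t' = g t' \<circ> g t"
  using g_jacobi[of t t'] torus_abelian by (simp add: fun_eq_iff g_simps)

lemma joint_eigenvectors_torus_basis:
  assumes "T \<subseteq> M.span B"
  shows "joint_eigenvectors (g ` B) \<subseteq> joint_eigenvectors (g ` T)"
proof
  fix x assume x: "x \<in> joint_eigenvectors (g ` B)"
  interpret gx: module_hom smul smul "\<lambda>t. g t x"
    using blin_g by (intro lin_module_hom blin_lin_left)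
  have "M.subspace {t. \<exists>c. g t x = smul c x}"
    unfolding M.subspace_def
  proof (intro conjI ballI allI)
    show "0 \<in> {t. \<exists>c. g t x = smul c x}" by (auto intro: exI[of _ 0])
    show "t + t' \<in> {t. \<exists>c. g t x = smul c x}" if "t \<in> {t. \<exists>c. g t x = smul c x}"
      and "t' \<in> {t. \<exists>c. g t x = smul c x}" for t t'
      using that by (auto simp: gx.add M.scale_left_distrib[symmetric])
    show "smul c t \<in> {t. \<exists>c. g t x = smul c x}" if "t \<in> {t. \<exists>c. g t x = smul c x}" for c t
      using that by (auto simp: gx.scale)
  qed
  then have "M.span B \<subseteq> {t. \<exists>c. g t x = smul c x}"
    using x by (intro M.span_minimal) (auto simp: joint_eigenvectors_def)
  then show "x \<in> joint_eigenvectors (g ` T)"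
    using assms by (auto simp: joint_eigenvectors_def)
qed

lemma span_torus_weight_vectors: "M.span (T \<union> weight_vectors) = UNIV"
proof -
  obtain B where B: "B \<subseteq> T" "\<not> M.dependent B" "T \<subseteq> M.span B" "card B = V.dim T"
    by (rule V.basis_exists)
  have "M.span (joint_eigenvectors (g ` B)) = UNIV"
  proof (rule span_joint_eigenvectors)
    show "finite (g ` B)" using FD.finiteI_independent[OF B(2)] by simp
    show "lin f \<and> diagonalizable f" if "f \<in> g ` B" for f
      using that B(1) torus_diagonalizable blin_lin_right[OF blin_g] by auto
    show "f \<circ> h = h \<circ> f" if "f \<in> g ` B" "h \<in> g ` B" for f h
      using that B(1) torus_ad_commute by auto
  qed
  moreover have "x \<in> M.span (T \<union> weight_vectors)" if "x \<in> joint_eigenvectors (g ` T)" for x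
  proof (cases "x = 0")
    case False
    then show ?thesis by (intro M.span_base joint_eigenvector_torus_or_weight[OF that])
  qed (simp add: M.span_zero)
  then have "M.span (joint_eigenvectors (g ` B)) \<subseteq> M.span (T \<union> weight_vectors)"
    using joint_eigenvectors_torus_basis[OF B(3)] by (intro M.span_minimal M.subspace_span) blast
  ultimately show ?thesis by auto
qed

lemma lin_eq_0_on_torus_weight_vectors:
  assumes "lin f" and "\<And>x. x \<in> T \<union> weight_vectors \<Longrightarrow> f x = 0"
  shows "f x = 0"
  by (rule module_hom.eq_0_on_span[OF lin_module_hom[OF assms(1)], of "T \<union> weight_vectors"])
    (simp_all add: assms(2) span_torus_weight_vectors)

lemma torus_eq_0_if_weights_vanish:
  assumes e: "e \<in> T" and weights: "\<And>a. a \<in> weight_vectors \<Longrightarrow> weight a e = 0"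
  shows "e = 0"
proof (rule torus_central_eq_0[OF e])
  fix x
  show "g e x = 0"
  proof (rule lin_eq_0_on_torus_weight_vectors[where f="g e"])
    show "lin (g e)" using blin_g by (rule blin_lin_right)
    show "g e y = 0" if "y \<in> T \<union> weight_vectors" for y
      using that torus_abelian[OF e] weight_vector_eigen[OF _ e] weights by auto
  qed
qed

end

lemma smul_eq_smul_imp_eq:
  "smul l v = smul c a \<Longrightarrow> l \<noteq> 0 \<Longrightarrow> v = smul (c / l) (a :: 'n \<Rightarrow> complex)"
  by (simp add: fun_eq_iff smul_def field_simps)

locale torus_nilradical_product = torus_nilradical_split g T N
  for g :: "('n::finite) cbr" and T N +
  fixes s :: "('n \<Rightarrow> complex) \<Rightarrow> ('n \<Rightarrow> complex) \<Rightarrow> ('n \<Rightarrow> complex)"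
  assumes blin_s: "blin s" and s_commute: "s x y = s y x"
    and s_assoc: "s (s x y) z = s x (s y z)"
    and leibniz: "g x (s y z) = s (g x y) z + s y (g x z)"
begin

lemmas s_simps = blin_simps[OF blin_s]

lemma s_torus_closed: "t \<in> T \<Longrightarrow> t' \<in> T \<Longrightarrow> s t t' \<in> T"
  by (rule torus_self_centralizing) (simp add: leibniz torus_abelian s_simps)

definition mult_eigval :: "('n \<Rightarrow> complex) \<Rightarrow> ('n \<Rightarrow> complex) \<Rightarrow> complex" where
  "mult_eigval a t = eigval (s t) a"

lemma mult_eigval_0: "mult_eigval a 0 = 0"
  by (simp add: mult_eigval_def eigval_def s_simps)

lemma ad_weight_vector: "a \<in> weight_vectors \<Longrightarrow> t \<in> T \<Longrightarrow> g a t = - smul (weight a t) a"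
  using g_antisym[of a t] weight_vector_eigen by simp

lemma weight_leibniz:
  assumes a: "a \<in> weight_vectors" and t: "t \<in> T" and t': "t' \<in> T"
  shows "smul (weight a (s t t')) a = smul (weight a t) (s a t') + smul (weight a t') (s t a)"
proof -
  have "- smul (weight a (s t t')) a = - (smul (weight a t) (s a t') + smul (weight a t') (s t a))"
    using leibniz[of a t t'] by (simp add: ad_weight_vector a t t' s_torus_closed s_simps)
  then show ?thesis by (simp only: neg_equal_iff_equal)
qed

lemma mult_weight_vector_eigen:
  assumes a: "a \<in> weight_vectors" and t: "t \<in> T"
  shows "s t a = smul (mult_eigval a t) a"
proof -
  obtain t0 where t0: "t0 \<in> T" and l0: "weight a t0 \<noteq> 0"
    using weight_vector_weight_nonzero[OF a] by blast
  define c0 where "c0 = weight a (s t0 t0) / (2 * weight a t0)"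
  have "smul (2 * weight a t0) (s t0 a) = smul (weight a (s t0 t0)) a"
    using weight_leibniz[OF a t0 t0] s_commute[of a t0] by (simp add: fun_eq_iff smul_def algebra_simps)
  then have st0: "s t0 a = smul c0 a"
    unfolding c0_def by (rule smul_eq_smul_imp_eq) (simp add: l0)
  have "smul (weight a t0) (s t a) = smul (weight a (s t t0) - weight a t * c0) a"
    using weight_leibniz[OF a t t0] s_commute[of a t0] st0 by (simp add: fun_eq_iff smul_def algebra_simps)
  then have "s t a = smul ((weight a (s t t0) - weight a t * c0) / weight a t0) a"
    using l0 by (rule smul_eq_smul_imp_eq)
  moreover have "a \<noteq> 0" using a by (simp add: weight_vectors_def)
  ultimately show ?thesis by (simp add: mult_eigval_def eigval_eq)
qed

lemma mult_eigval_mult: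
  assumes a: "a \<in> weight_vectors" and t: "t \<in> T" and t': "t' \<in> T"
  shows "mult_eigval a (s t t') = mult_eigval a t * mult_eigval a t'"
proof -
  have "smul (mult_eigval a (s t t')) a = s t (s t' a)"
    using mult_weight_vector_eigen[OF a s_torus_closed[OF t t']] by (simp add: s_assoc)
  also have "\<dots> = smul (mult_eigval a t * mult_eigval a t') a"
    by (simp add: mult_weight_vector_eigen[OF a] t t' s_simps mult.commute)
  finally show ?thesis
    using smul_right_cancel a by (auto simp: weight_vectors_def)
qed

lemma weight_mult:
  assumes a: "a \<in> weight_vectors" and t: "t \<in> T" and t': "t' \<in> T"
  shows "weight a (s t t') = weight a t * mult_eigval a t' + weight a t' * mult_eigval a t"
proof -
  have "smul (weight a (s t t')) a = smul (weight a t * mult_eigval a t' + weight a t' * mult_eigval a t) a"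
    using weight_leibniz[OF a t t'] s_commute[of a t']
    by (simp add: mult_weight_vector_eigen[OF a] t t' fun_eq_iff smul_def algebra_simps)
  then show ?thesis
    using smul_right_cancel a by (auto simp: weight_vectors_def)
qed

text \<open>An idempotent \<open>e\<close> of the torus has \<open>\<beta> = \<beta>\<^sup>2\<close> and \<open>\<lambda> = 2 \<lambda> \<beta>\<close> for every weight \<open>\<lambda>\<close>
  (with \<open>\<beta>\<close> the corresponding eigenvalue of multiplication by \<open>e\<close>), so all weights vanish at \<open>e\<close>.\<close>

lemma torus_idempotent_eq_0:
  assumes e: "e \<in> T" and idem: "s e e = e"
  shows "e = 0"
proof (rule torus_eq_0_if_weights_vanish[OF e])
  fix a assume a: "a \<in> weight_vectors"
  have "mult_eigval a e = mult_eigval a e * mult_eigval a e"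
    using mult_eigval_mult[OF a e e] idem by simp
  moreover have "weight a e = 2 * weight a e * mult_eigval a e"
    using weight_mult[OF a e e] idem by simp
  ultimately show "weight a e = 0"
    by (cases "mult_eigval a e = 0") auto
qed

lemma mult_eigval_eq_0:
  assumes a: "a \<in> weight_vectors" and u: "u \<in> T"
  shows "mult_eigval a u = 0"
proof (rule ccontr)
  assume nz: "mult_eigval a u \<noteq> 0"
  have powers_T: "(s u ^^ k) u \<in> T" for k
    by (induction k) (simp_all add: u s_torus_closed)
  have powers: "mult_eigval a ((s u ^^ k) u) = mult_eigval a u ^ Suc k" for k
    by (induction k) (simp_all add: mult_eigval_mult[OF a u powers_T])
  have "(s u ^^ k) u \<noteq> 0" for k
  proof
    assume "(s u ^^ k) u = 0"
    then have "mult_eigval a u ^ Suc k = 0"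
      using powers[of k] by (simp add: mult_eigval_0)
    then show False using nz by simp
  qed
  then obtain e where "e \<in> T" "e \<noteq> 0" "s e e = e"
    using idempotent_of_non_nilpotent[OF blin_s s_commute s_assoc torus_subspace s_torus_closed u]
    by blast
  then show False using torus_idempotent_eq_0 by blast
qed

theorem product_eq_0: "s x y = 0"
proof -
  have torus_torus: "s t t' = 0" if t: "t \<in> T" and t': "t' \<in> T" for t t'
    by (rule torus_eq_0_if_weights_vanish[OF s_torus_closed[OF t t']])
      (simp add: weight_mult t t' mult_eigval_eq_0)
  have torus_weight: "s t a = 0" if t: "t \<in> T" and a: "a \<in> weight_vectors" for t a
    using mult_weight_vector_eigen[OF a t] mult_eigval_eq_0[OF a t] by (simp add: M.scale_zero_left)
  have torus_any: "s t z = 0" if t: "t \<in> T" for t z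
    by (rule lin_eq_0_on_torus_weight_vectors[where f="s t", OF blin_lin_right[OF blin_s]])
      (use torus_torus torus_weight t in blast)
  have weight_any: "s a z = 0" if a: "a \<in> weight_vectors" for a z
  proof -
    obtain t0 where t0: "t0 \<in> T" and l0: "weight a t0 \<noteq> 0"
      using weight_vector_weight_nonzero[OF a] by blast
    have "s (g a t0) z = 0"
      using leibniz[of a t0 z] torus_any[OF t0] by (simp add: g_simps)
    then have "smul (weight a t0) (s a z) = 0"
      by (simp add: ad_weight_vector[OF a t0] s_simps)
    then show ?thesis using l0 by simp
  qed
  show ?thesis
    by (rule lin_eq_0_on_torus_weight_vectors[where f="\<lambda>x. s x y", OF blin_lin_left[OF blin_s]])
      (use torus_any weight_any in blast)
qed

end

lemma (in torus_nilradical_split) compatible_product_eq_0: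
  assumes "blin s" and "\<And>x y. s x y = s y x" and "\<And>x y z. s (s x y) z = s x (s y z)"
    and "\<And>x y z. g x (s y z) = s (g x y) z + s y (g x z)"
  shows "s x y = 0"
proof -
  interpret torus_nilradical_product g T N s
    by unfold_locales (fact assms)+
  show ?thesis by (rule product_eq_0)
qed

lemma pbr_eq_smul_commutator: "pbr m x y = smul (1/2) (commutator m x y)"
  by (simp add: pbr_def commutator_def smul_def fun_eq_iff)

lemma ppr_eq_smul_anticommutator: "ppr m x y = smul (1/2) (anticommutator m x y)"
  by (simp add: ppr_def anticommutator_def smul_def fun_eq_iff)

lemma blin_scaled:
  assumes "blin m"
  shows "blin (\<lambda>x y. smul c (m x y))"
  by (rule blinI) (simp_all only: blin_simps[OF assms] M.scale_right_distrib M.scale_scale mult.commute)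

lemma adm_poisson_pbr_is_lie:
  assumes m: "blin m" and adm: "adm_poisson m"
  shows "is_lie (pbr m)"
  unfolding is_lie_def
proof (intro conjI allI)
  have c: "blin (commutator m)" using m by (rule blin_commutator)
  have "pbr m = (\<lambda>x y. smul (1/2) (commutator m x y))"
    by (simp add: fun_eq_iff pbr_eq_smul_commutator)
  then show "blin (pbr m)"
    using blin_scaled[OF c] by simp
  show "pbr m x x = vzero" for x
    by (simp add: pbr_def vzero_def)
  show "vadd (vadd (pbr m x (pbr m y z)) (pbr m y (pbr m z x))) (pbr m z (pbr m x y)) = vzero" for x y z
  proof -
    have "vadd (vadd (pbr m x (pbr m y z)) (pbr m y (pbr m z x))) (pbr m z (pbr m x y))
      = smul (1/4) (commutator m x (commutator m y z) + commutator m y (commutator m z x)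
          + commutator m z (commutator m x y))"
      unfolding pbr_eq_smul_commutator blin_rmul[OF c] by (simp add: vadd_def smul_def fun_eq_iff)
    then show ?thesis
      by (simp add: adm_poisson_commutator_jacobi[OF m adm] vzero_eq)
  qed
qed

lemma anticommutative_pbr_eq:
  assumes "\<And>x y. anticommutator m x y = 0"
  shows "pbr m = m"
proof (intro ext)
  fix x y k
  have "m y x = - m x y"
    using assms[of x y] unfolding anticommutator_def add_eq_0_iff .
  then show "pbr m x y k = m x y k" by (simp add: pbr_def)
qed

lemma torus_nilradical_split_pbr:
  assumes "blin mu" and "adm_poisson mu"
    and "max_ext_torus (pbr mu) T" and "nilradical (pbr mu) N"
    and "T \<inter> N = {vzero}" and "\<forall>x. \<exists>t\<in>T. \<exists>y\<in>N. x = vadd t y"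
    and "\<forall>lam. is_root (pbr mu) T N lam \<longrightarrow> (\<exists>t\<in>T. lam t \<noteq> 0)"
  shows "torus_nilradical_split (pbr mu) T N"
  using assms adm_poisson_pbr_is_lie by unfold_locales (simp_all add: max_ext_torus_def)

lemma commutator_leibniz_product_eq_0:
  assumes "torus_nilradical_split (pbr mu) T N"
    and s: "blin s" and "\<And>x y. s x y = s y x" and "\<And>x y z. s (s x y) z = s x (s y z)"
    and leibniz: "\<And>x y z. commutator mu x (s y z) = s (commutator mu x y) z + s y (commutator mu x z)"
  shows "s x y = 0"
proof (rule torus_nilradical_split.compatible_product_eq_0[OF assms(1-4)])
  show "pbr mu x (s y z) = s (pbr mu x y) z + s y (pbr mu x z)" for x y z
    by (simp add: pbr_eq_smul_commutator leibniz blin_simps[OF s] M.scale_right_distrib)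
qed

lemma anticommutator_eq_0:
  assumes "torus_nilradical_split (pbr mu) T N" and mu: "blin mu" and adm: "adm_poisson mu"
  shows "anticommutator mu x y = 0"
  using assms(1) blin_anticommutator[OF mu] anticommutator_commute
    adm_poisson_anticommutator_assoc[OF mu adm] adm_poisson_commutator_leibniz[OF mu adm]
  by (rule commutator_leibniz_product_eq_0)

subsection \<open>Formal deformations\<close>

lemma fconst_add: "fconst (x + y) = fconst x + fconst y"
  by (simp add: fconst_def fun_eq_iff)

lemma fconst_smul: "fconst (smul c x) = smul (fps_const c) (fconst x)"
  by (simp add: fconst_def fun_eq_iff smul_def)

lemma fconst_ebas: "fconst (ebas i) = ebas i"
  by (simp add: fconst_def fun_eq_iff ebas_def)

text \<open>The coefficient \<open>\<phi>\<^sub>k\<close> of \<open>t\<^sup>k\<close> in \<open>M = \<phi>\<^sub>0 + t \<phi>\<^sub>1 + t\<^sup>2 \<phi>\<^sub>2 + \<dots>\<close>, a product on \<open>\<complex>\<^sup>n\<close>.\<close>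

definition coeff_prod ::
  "(('n::finite \<Rightarrow> complex fps) \<Rightarrow> ('n \<Rightarrow> complex fps) \<Rightarrow> ('n \<Rightarrow> complex fps)) \<Rightarrow> nat \<Rightarrow> 'n cbr"
  where "coeff_prod M k x y = (\<lambda>i. fps_nth (M (fconst x) (fconst y) i) k)"

lemma blin_coeff_prod:
  assumes M: "blin M"
  shows "blin (coeff_prod M k)"
  by (rule blinI)
    (simp_all only: coeff_prod_def fconst_add fconst_smul blin_simps[OF M], simp_all add: fun_eq_iff smul_def)

lemma coeff_prod_commutator: "coeff_prod (commutator M) k = commutator (coeff_prod M k)"
  by (simp add: coeff_prod_def commutator_def fun_eq_iff)

lemma coeff_prod_anticommutator: "coeff_prod (anticommutator M) k = anticommutator (coeff_prod M k)"
  by (simp add: coeff_prod_def anticommutator_def fun_eq_iff)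

lemma deformation_coeff_prod_0: "is_deformation mu M \<Longrightarrow> coeff_prod M 0 = mu"
  by (simp add: is_deformation_def coeff_prod_def fun_eq_iff)

lemma fps_mult_nth_lowest:
  fixes f g :: "'a::{comm_monoid_add,mult_zero} fps"
  assumes "\<And>j. j < q \<Longrightarrow> fps_nth f j = 0" and "\<And>j. j < p \<Longrightarrow> fps_nth g j = 0"
  shows "fps_nth (f * g) (q + p) = fps_nth f q * fps_nth g p"
proof -
  have "fps_nth (f * g) (q + p) = (\<Sum>j\<in>{q}. fps_nth f j * fps_nth g (q + p - j))"
    unfolding fps_mult_nth
  proof (intro sum.mono_neutral_right ballI)
    fix j assume "j \<in> {0..q + p} - {q}"
    then have "j < q \<or> q + p - j < p" by auto
    then show "fps_nth f j * fps_nth g (q + p - j) = 0" using assms by auto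
  qed auto
  then show ?thesis by simp
qed

lemma coeff_compose_left:
  fixes M M' :: "('n::finite \<Rightarrow> complex fps) \<Rightarrow> ('n \<Rightarrow> complex fps) \<Rightarrow> ('n \<Rightarrow> complex fps)"
  assumes M: "blin M" and M': "blin M'"
    and low: "\<And>j x y. j < p \<Longrightarrow> coeff_prod M j x y = 0"
    and low': "\<And>j x y. j < q \<Longrightarrow> coeff_prod M' j x y = 0"
  shows "fps_nth (M (M' (fconst x) (fconst y)) (fconst z) i) (q + p)
    = coeff_prod M p (coeff_prod M' q x y) z i"
proof -
  define W where "W = M' (fconst x) (fconst y)"
  have "M W (fconst z) = (\<Sum>l\<in>UNIV. smul (W l) (M (ebas l) (fconst z)))"
    using blin_lin_left[OF M] by (rule lin_ebas_expansion)
  then have "fps_nth (M W (fconst z) i) (q + p)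
      = (\<Sum>l\<in>UNIV. fps_nth (W l * M (ebas l) (fconst z) i) (q + p))"
    by (simp add: sum_apply smul_def fps_sum_nth)
  also have "\<dots> = (\<Sum>l\<in>UNIV. coeff_prod M' q x y l * coeff_prod M p (ebas l) z i)"
  proof (rule sum.cong[OF refl])
    fix l
    show "fps_nth (W l * M (ebas l) (fconst z) i) (q + p) = coeff_prod M' q x y l * coeff_prod M p (ebas l) z i"
      using low'[of _ x y] low[of _ "ebas l" z]
      by (subst fps_mult_nth_lowest) (auto simp: W_def coeff_prod_def fconst_ebas fun_eq_iff)
  qed
  also have "\<dots> = coeff_prod M p (coeff_prod M' q x y) z i"
  proof -
    have "coeff_prod M p v z = (\<Sum>l\<in>UNIV. smul (v l) (coeff_prod M p (ebas l) z))" for v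
      by (rule lin_ebas_expansion[OF blin_lin_left[OF blin_coeff_prod[OF M]]])
    from fun_cong[OF this[of "coeff_prod M' q x y"], of i] show ?thesis
      by (simp add: sum_apply smul_def)
  qed
  finally show ?thesis by (simp add: W_def)
qed

lemma coeff_compose_right:
  fixes M M' :: "('n::finite \<Rightarrow> complex fps) \<Rightarrow> ('n \<Rightarrow> complex fps) \<Rightarrow> ('n \<Rightarrow> complex fps)"
  assumes M: "blin M" and M': "blin M'"
    and low: "\<And>j x y. j < p \<Longrightarrow> coeff_prod M j x y = 0"
    and low': "\<And>j x y. j < q \<Longrightarrow> coeff_prod M' j x y = 0"
  shows "fps_nth (M (fconst x) (M' (fconst y) (fconst z)) i) (q + p)
    = coeff_prod M p x (coeff_prod M' q y z) i"
proof -
  have "blin (\<lambda>x y. M y x)" using M by (simp add: blin_def)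
  moreover have "coeff_prod (\<lambda>x y. M y x) j = (\<lambda>x y. coeff_prod M j y x)" for j
    by (simp add: coeff_prod_def fun_eq_iff)
  ultimately show ?thesis
    using coeff_compose_left[of "\<lambda>x y. M y x" M' p q y z x i] M' low low' by simp
qed

lemma blin_eq_0_if_const_eq_0:
  fixes M :: "('n::finite \<Rightarrow> complex fps) \<Rightarrow> ('n \<Rightarrow> complex fps) \<Rightarrow> ('n \<Rightarrow> complex fps)"
  assumes M: "blin M" and const: "\<And>x y. M (fconst x) (fconst y) = 0"
  shows "M X Y = 0"
proof -
  have "M (ebas i) (ebas l) = 0" for i l
    using const[of "ebas i" "ebas l"] by (simp add: fconst_ebas)
  then have "M (ebas i) Y = 0" for i
    using lin_ebas_expansion[OF blin_lin_right[OF M, of "ebas i"], of Y] by simp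
  then show ?thesis
    using lin_ebas_expansion[OF blin_lin_left[OF M, of Y], of X] by simp
qed

lemma blin_deformation: "is_deformation mu M \<Longrightarrow> blin M"
  by (simp add: is_deformation_def)

context
  fixes mu and M :: "('n::finite \<Rightarrow> complex fps) \<Rightarrow> ('n \<Rightarrow> complex fps) \<Rightarrow> ('n \<Rightarrow> complex fps)"
    and k :: nat
  assumes deform: "is_deformation mu M" and adm: "adm_poisson M"
    and low: "\<And>j x y. j < k \<Longrightarrow> coeff_prod (anticommutator M) j x y = 0"
begin

lemma lowest_coeff_anticommutator_assoc:
  "coeff_prod (anticommutator M) k (coeff_prod (anticommutator M) k x y) z
     = coeff_prod (anticommutator M) k x (coeff_prod (anticommutator M) k y z)"
proof
  fix i
  let ?S = "anticommutator M"
  have S: "blin ?S" using blin_deformation[OF deform] by (rule blin_anticommutator)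
  have "coeff_prod ?S k (coeff_prod ?S k x y) z i
      = fps_nth (?S (?S (fconst x) (fconst y)) (fconst z) i) (k + k)"
    by (rule coeff_compose_left[OF S S low low, symmetric])
  also have "\<dots> = fps_nth (?S (fconst x) (?S (fconst y) (fconst z)) i) (k + k)"
    by (simp add: adm_poisson_anticommutator_assoc[OF blin_deformation[OF deform] adm])
  also have "\<dots> = coeff_prod ?S k x (coeff_prod ?S k y z) i"
    by (rule coeff_compose_right[OF S S low low])
  finally show "coeff_prod ?S k (coeff_prod ?S k x y) z i = coeff_prod ?S k x (coeff_prod ?S k y z) i" .
qed

lemma lowest_coeff_anticommutator_leibniz:
  "commutator mu x (coeff_prod (anticommutator M) k y z)
     = coeff_prod (anticommutator M) k (commutator mu x y) z
       + coeff_prod (anticommutator M) k y (commutator mu x z)"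
proof
  fix i
  let ?S = "anticommutator M" and ?B = "commutator M"
  have S: "blin ?S" and B: "blin ?B"
    using blin_deformation[OF deform] by (rule blin_anticommutator, rule blin_commutator)
  have B_low: "\<And>j x y. j < 0 \<Longrightarrow> coeff_prod ?B j x y = 0" by simp
  have B0: "coeff_prod ?B 0 = commutator mu"
    by (simp add: coeff_prod_commutator deformation_coeff_prod_0[OF deform])
  have "commutator mu x (coeff_prod ?S k y z) i
      = fps_nth (?B (fconst x) (?S (fconst y) (fconst z)) i) (k + 0)"
    unfolding B0[symmetric] by (rule coeff_compose_right[OF B S B_low low, symmetric])
  also have "\<dots> = fps_nth (?S (?B (fconst x) (fconst y)) (fconst z) i) (0 + k)
      + fps_nth (?S (fconst y) (?B (fconst x) (fconst z)) i) (0 + k)"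
    by (simp add: adm_poisson_commutator_leibniz[OF blin_deformation[OF deform] adm])
  also have "\<dots> = coeff_prod ?S k (commutator mu x y) z i + coeff_prod ?S k y (commutator mu x z) i"
    unfolding B0[symmetric]
    by (simp only: coeff_compose_left[OF S B low B_low] coeff_compose_right[OF S B low B_low])
  finally show "commutator mu x (coeff_prod ?S k y z) i
      = (coeff_prod ?S k (commutator mu x y) z + coeff_prod ?S k y (commutator mu x z)) i"
    by simp
qed

end

text \<open>The lowest non-zero coefficient of the symmetric part of a deformation would be a product
  as in \<open>commutator_leibniz_product_eq_0\<close>, for the commutator \<open>\<phi>\<^sub>0\<close> of \<open>\<mu>\<close>.\<close>

lemma deformation_coeff_anticommutator_eq_0:
  assumes split: "torus_nilradical_split (pbr mu) T N"
    and deform: "is_deformation mu M" and adm: "adm_poisson M"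
  shows "coeff_prod (anticommutator M) k x y = 0"
proof (induction k arbitrary: x y rule: less_induct)
  case (less k)
  have S: "blin (anticommutator M)"
    using blin_deformation[OF deform] by (rule blin_anticommutator)
  have low: "\<And>j x y. j < k \<Longrightarrow> coeff_prod (anticommutator M) j x y = 0"
    using less.IH .
  show ?case
  proof (rule commutator_leibniz_product_eq_0[OF split blin_coeff_prod[OF S]])
    show "coeff_prod (anticommutator M) k x y = coeff_prod (anticommutator M) k y x" for x y
      by (simp add: coeff_prod_anticommutator anticommutator_commute)
    show "coeff_prod (anticommutator M) k (coeff_prod (anticommutator M) k x y) z
        = coeff_prod (anticommutator M) k x (coeff_prod (anticommutator M) k y z)" for x y z
      by (rule lowest_coeff_anticommutator_assoc[OF deform adm low])
    show "commutator mu x (coeff_prod (anticommutator M) k y z)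
        = coeff_prod (anticommutator M) k (commutator mu x y) z
          + coeff_prod (anticommutator M) k y (commutator mu x z)" for x y z
      by (rule lowest_coeff_anticommutator_leibniz[OF deform adm low])
  qed
qed

lemma deformation_anticommutator_eq_0:
  assumes split: "torus_nilradical_split (pbr mu) T N"
    and deform: "is_deformation mu M" and adm: "adm_poisson M"
  shows "anticommutator M X Y = 0"
proof (rule blin_eq_0_if_const_eq_0[where M="anticommutator M"])
  show "blin (anticommutator M)"
    using blin_deformation[OF deform] by (rule blin_anticommutator)
  show "anticommutator M (fconst x) (fconst y) = 0" for x y
    using deformation_coeff_anticommutator_eq_0[OF assms]
    by (simp add: coeff_prod_def fun_eq_iff fps_eq_iff)
qed

theorem mainTheorem19:
  fixes mu :: "('n::finite \<Rightarrow> complex) \<Rightarrow> ('n \<Rightarrow> complex) \<Rightarrow> ('n \<Rightarrow> complex)"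
    and T N :: "('n \<Rightarrow> complex) set"
  assumes "blin mu" and "adm_poisson mu"
    and "lie_solvable (pbr mu)" and "lie_rigid (pbr mu)"
    and "max_ext_torus (pbr mu) T" and "nilradical (pbr mu) N"
    and "T \<inter> N = {vzero}" and "\<forall>x. \<exists>t\<in>T. \<exists>y\<in>N. x = vadd t y"
    and "\<forall>lam. is_root (pbr mu) T N lam \<longrightarrow> (\<exists>t\<in>T. lam t \<noteq> 0)"
  shows "cspan {ppr mu x y | x y. True} = {vzero} \<and> poisson_rigid mu"
proof
  have split: "torus_nilradical_split (pbr mu) T N"
    using assms(1,2,5-9) by (rule torus_nilradical_split_pbr)
  have sym: "anticommutator mu x y = 0" for x y
    using split assms(1,2) by (rule anticommutator_eq_0)
  then show "cspan {ppr mu x y | x y. True} = {vzero}"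
    by (intro cspan_eq_zero) (auto simp: ppr_eq_smul_anticommutator vzero_eq)
  have pbr: "pbr mu = mu"
    using sym by (rule anticommutative_pbr_eq)
  show "poisson_rigid mu"
    unfolding poisson_rigid_def
  proof (intro allI impI, elim conjE)
    fix m' assume deform: "is_deformation mu m'" and adm: "adm_poisson m'"
    have "is_lie m'"
      using blin_deformation[OF deform] adm deformation_anticommutator_eq_0[OF split deform adm]
      by (rule adm_poisson_anticommutative_is_lie)
    then show "def_isomorphic mu m'"
      using assms(4) deform by (simp add: lie_rigid_def pbr)
  qed
qed

end
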